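(* Let $G$ be a road network with $n$ nodes and maximum degree $\Delta$, with random edge nuances as in the context. Let $i\in[0,h]$, let $B$ be a $4\times4$-cell region of $R_i$, and let $s$ be a node in $B$. Let $\zeta$ (resp. $\zeta'$) be the event that there exists another node $v$ such that the local shortest path from $s$ to $v$ (resp. from $v$ to $s$) in $B$ is not unique. Then $\Pr\{\zeta\vee\zeta'\}\le \binom{\Delta}{2}\cdot 2n/\tau$.
   Context: A road network $G$ is a directed, connected graph of bounded degree with $n$ nodes, each located at a point of the plane, each edge $e$ having positive length $l(e)$; $l(P)$ is the sum of edge lengths along a path. Grids: $R_h$ is a $4\times4$-cell grid tightly covering all nodes; each cell is recursively split into $2\times2$ cells until each cell contains at most one node, giving $h$ grids; for $i\in[0,h]$, $R_i$ denotes the square grid over the same square with $2^{h+2-i}\times2^{h+2-i}$ cells. A $4\times4$-cell region is a block of $4\times4$ consecutive cells. A path is a local path in $B$ if at most one of its edges (as a straight segment) intersects the boundary of $B$. Each edge $e$ receives an independent uniformly random integer nuance $\rho(e)\in\{0,\dots,\tau-1\}$, and $\rho(P)=\sum_{e\in P}\rho(e)$. Path $P_1$ is shorter than $P_2$ if $l(P_1)<l(P_2)$, or $l(P_1)=l(P_2)$ and $\rho(P_1)<\rho(P_2)$. A local shortest path from $s$ to $v$ in $B$ is a local path in $B$ from $s$ to $v$ not beaten in this order by any other such local path; it is not unique if two distinct such paths have equal length and equal nuance. *)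

theory Defs
  imports "HOL-Probability.Probability"
begin

text \<open>Node positions are assumed pairwise distinct (needed for the grid hierarchy to terminate).\<close>

definition road_network ::
  "'v set \<Rightarrow> ('v \<times> 'v) set \<Rightarrow> ('v \<Rightarrow> real \<times> real) \<Rightarrow> ('v \<times> 'v \<Rightarrow> real) \<Rightarrow> bool" where
  "road_network V E pos l \<longleftrightarrow>
     finite V \<and> V \<noteq> {} \<and> E \<subseteq> V \<times> V \<and>
     (\<forall>u\<in>V. \<forall>w\<in>V. (u, w) \<in> (E \<union> E\<inverse>)\<^sup>*) \<and>
     (\<forall>e\<in>E. 0 < l e) \<and> inj_on pos V"

definition degree :: "('v \<times> 'v) set \<Rightarrow> 'v \<Rightarrow> nat" where
  "degree E u = card {e \<in> E. fst e = u \<or> snd e = u}"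

definition max_degree :: "'v set \<Rightarrow> ('v \<times> 'v) set \<Rightarrow> nat" where
  "max_degree V E = Max (degree E ` V)"

definition path_edges :: "'v list \<Rightarrow> ('v \<times> 'v) list" where
  "path_edges p = zip p (tl p)"

definition is_path :: "('v \<times> 'v) set \<Rightarrow> 'v \<Rightarrow> 'v \<Rightarrow> 'v list \<Rightarrow> bool" where
  "is_path E s t p \<longleftrightarrow> p \<noteq> [] \<and> hd p = s \<and> last p = t \<and> distinct p \<and> set (path_edges p) \<subseteq> E"

definition plen :: "('v \<times> 'v \<Rightarrow> real) \<Rightarrow> 'v list \<Rightarrow> real" where
  "plen l p = sum_list (map l (path_edges p))"

definition pnu :: "('v \<times> 'v \<Rightarrow> nat) \<Rightarrow> 'v list \<Rightarrow> nat" where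
  "pnu \<rho> p = sum_list (map \<rho> (path_edges p))"

definition path_shorter :: "('v \<times> 'v \<Rightarrow> real) \<Rightarrow> ('v \<times> 'v \<Rightarrow> nat) \<Rightarrow> 'v list \<Rightarrow> 'v list \<Rightarrow> bool" where
  "path_shorter l \<rho> p q \<longleftrightarrow> plen l p < plen l q \<or> (plen l p = plen l q \<and> pnu \<rho> p < pnu \<rho> q)"

definition local_path ::
  "('v \<Rightarrow> real \<times> real) \<Rightarrow> ('v \<times> 'v) set \<Rightarrow> (real \<times> real) set \<Rightarrow> 'v \<Rightarrow> 'v \<Rightarrow> 'v list \<Rightarrow> bool" where
  "local_path pos E B s t p \<longleftrightarrow> is_path E s t p \<and>
     length (filter (\<lambda>(u, w). closed_segment (pos u) (pos w) \<inter> frontier B \<noteq> {}) (path_edges p)) \<le> 1"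

definition local_shortest ::
  "('v \<Rightarrow> real \<times> real) \<Rightarrow> ('v \<times> 'v) set \<Rightarrow> ('v \<times> 'v \<Rightarrow> real) \<Rightarrow> ('v \<times> 'v \<Rightarrow> nat) \<Rightarrow>
   (real \<times> real) set \<Rightarrow> 'v \<Rightarrow> 'v \<Rightarrow> 'v list \<Rightarrow> bool" where
  "local_shortest pos E l \<rho> B s t p \<longleftrightarrow> local_path pos E B s t p \<and>
     \<not> (\<exists>q. local_path pos E B s t q \<and> path_shorter l \<rho> q p)"

definition lsp_not_unique ::
  "('v \<Rightarrow> real \<times> real) \<Rightarrow> ('v \<times> 'v) set \<Rightarrow> ('v \<times> 'v \<Rightarrow> real) \<Rightarrow> ('v \<times> 'v \<Rightarrow> nat) \<Rightarrow>
   (real \<times> real) set \<Rightarrow> 'v \<Rightarrow> 'v \<Rightarrow> bool" where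
  "lsp_not_unique pos E l \<rho> B s t \<longleftrightarrow>
     (\<exists>p q. p \<noteq> q \<and> local_shortest pos E l \<rho> B s t p \<and> local_shortest pos E l \<rho> B s t q \<and>
            plen l p = plen l q \<and> pnu \<rho> p = pnu \<rho> q)"

definition tight_cover :: "'v set \<Rightarrow> ('v \<Rightarrow> real \<times> real) \<Rightarrow> real \<Rightarrow> real \<Rightarrow> real \<Rightarrow> bool" where
  "tight_cover V pos x0 y0 L \<longleftrightarrow>
     (\<forall>u\<in>V. fst (pos u) \<in> {x0..x0 + L} \<and> snd (pos u) \<in> {y0..y0 + L}) \<and>
     L = max (Max ((fst \<circ> pos) ` V) - Min ((fst \<circ> pos) ` V))
             (Max ((snd \<circ> pos) ` V) - Min ((snd \<circ> pos) ` V))"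

text \<open>Index (0..m-1) of the half-open cell containing coordinate x, when [x0,x0+L]
  is divided into m equal cells (the last cell is closed).\<close>

definition cell_idx :: "real \<Rightarrow> real \<Rightarrow> nat \<Rightarrow> real \<Rightarrow> nat" where
  "cell_idx x0 L m x = min (m - 1) (nat \<lfloor>(x - x0) / L * real m\<rfloor>)"

definition cells_separate :: "'v set \<Rightarrow> ('v \<Rightarrow> real \<times> real) \<Rightarrow> real \<Rightarrow> real \<Rightarrow> real \<Rightarrow> nat \<Rightarrow> bool" where
  "cells_separate V pos x0 y0 L m \<longleftrightarrow>
     (\<forall>u\<in>V. \<forall>w\<in>V. u \<noteq> w \<longrightarrow>
        (cell_idx x0 L m (fst (pos u)), cell_idx y0 L m (snd (pos u))) \<noteq>
        (cell_idx x0 L m (fst (pos w)), cell_idx y0 L m (snd (pos w))))"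

text \<open>h: number of halvings of the 4x4 grid R_h needed until every cell holds at most one node;
  R_i has 2^(h+2-i) cells per side.\<close>

definition grid_height :: "'v set \<Rightarrow> ('v \<Rightarrow> real \<times> real) \<Rightarrow> real \<Rightarrow> real \<Rightarrow> real \<Rightarrow> nat" where
  "grid_height V pos x0 y0 L = (LEAST k. cells_separate V pos x0 y0 L (2 ^ (k + 2)))"

definition is_4x4_region :: "real \<Rightarrow> real \<Rightarrow> real \<Rightarrow> nat \<Rightarrow> (real \<times> real) set \<Rightarrow> bool" where
  "is_4x4_region x0 y0 L m B \<longleftrightarrow>
     (\<exists>a b :: nat. a + 4 \<le> m \<and> b + 4 \<le> m \<and>
        B = {x0 + real a * (L / real m) .. x0 + real (a + 4) * (L / real m)} \<times>
            {y0 + real b * (L / real m) .. y0 + real (b + 4) * (L / real m)})"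

end

theory Submission
  imports Defs
begin

text \<open>
  Suppose two local shortest paths from \<open>s\<close> to \<open>v\<close> tie in length and nuance. Followed back
  from \<open>v\<close>, they part for the first time at a node \<open>w\<close> that they enter through different edges
  \<open>e\<close> and \<open>e'\<close>. Prefixes of local shortest paths are local shortest paths; this is where the
  region enters, and only its convexity is used: from a start in \<open>B\<close>, the number of boundary
  crossings of a local path depends only on its end. So each of \<open>e\<close>, \<open>e'\<close> lies on a local
  shortest \<open>s\<close>-\<open>w\<close> path tied with one avoiding it. Once all other nuances are fixed, such a
  tie pins down \<open>\<rho> e\<close>, so it has probability at most \<open>1/\<tau>\<close>. All in-edges of \<open>w\<close> but one
  fixed one must carry a tie, and a union bound over nodes gives \<open>|V| (\<Delta> - 1) / \<tau>\<close>. Reversing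
  all edges treats the paths into \<open>s\<close> in the same way, and \<open>\<Delta> - 1 \<le> \<Delta> choose 2\<close>.
\<close>

section \<open>Vertex lists as paths\<close>

lemma path_edges_simps [simp]:
  "path_edges [] = []"
  "path_edges [x] = []"
  "path_edges (x # y # xs) = (x, y) # path_edges (y # xs)"
  by (simp_all add: path_edges_def)

text \<open>The splitting lemmas below must not be used as plain simp rules: their right-hand side
  \<open>xs @ [y]\<close> matches \<open>xs @ y # ys\<close> again, so they are only ever applied instantiated.\<close>

lemma path_edges_append: "path_edges (xs @ y # ys) = path_edges (xs @ [y]) @ path_edges (y # ys)"
  by (induction xs rule: induct_list012) auto

lemma path_edges_snoc: "xs \<noteq> [] \<Longrightarrow> path_edges (xs @ [y]) = path_edges xs @ [(last xs, y)]"
  by (induction xs rule: induct_list012) auto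

lemma path_edges_rev: "path_edges (rev p) = rev (map prod.swap (path_edges p))"
proof (induction p rule: induct_list012)
  case (3 x y zs)
  have "path_edges (rev (x # y # zs)) = path_edges (rev (y # zs) @ [x])"
    by simp
  also have "\<dots> = path_edges (rev (y # zs)) @ [(y, x)]"
    by (subst path_edges_snoc) (simp_all add: last_rev)
  finally show ?case
    using "3.IH"(2) by simp
qed simp_all

lemma mem_path_edgesD: "(a, b) \<in> set (path_edges p) \<Longrightarrow> a \<in> set p \<and> b \<in> set p"
  by (induction p rule: induct_list012) auto

lemma distinct_path_edges: "distinct p \<Longrightarrow> distinct (path_edges p)"
  by (induction p rule: induct_list012) (auto dest: mem_path_edgesD)

lemma is_path_append_iff:
  "is_path E s v (xs @ y # ys) \<longleftrightarrow>
     is_path E s y (xs @ [y]) \<and> is_path E y v (y # ys) \<and> set xs \<inter> set ys = {}"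
  by (auto simp: is_path_def path_edges_append[of xs y ys] hd_append)

lemma is_path_same_ends: "is_path E s s p \<Longrightarrow> p = [s]"
  by (cases p) (auto simp: is_path_def split: if_splits)

lemma is_path_distinct_ends:
  assumes "is_path E s t p" "s \<noteq> t"
  obtains y r where "p = s # y # r"
  using assms that by (cases p; cases "tl p") (auto simp: is_path_def)

lemma is_path_rev_iff: "is_path (E\<inverse>) t s (rev p) \<longleftrightarrow> is_path E s t p"
  unfolding is_path_def by (auto simp: hd_rev last_rev path_edges_rev)

lemma common_suffix_split:
  "p \<noteq> q \<Longrightarrow> p \<noteq> [] \<Longrightarrow> q \<noteq> [] \<Longrightarrow> last p = last q \<Longrightarrow>
    \<exists>p1 q1 w r. p = p1 @ w # r \<and> q = q1 @ w # r \<and> p1 \<noteq> q1 \<and>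
      (p1 = [] \<or> q1 = [] \<or> last p1 \<noteq> last q1)"
proof (induction p arbitrary: q rule: rev_induct)
  case (snoc x p')
  obtain q' where q: "q = q' @ [x]"
    using snoc.prems(3,4) by (cases q rule: rev_cases) auto
  show ?case
  proof (cases "p' = [] \<or> q' = [] \<or> last p' \<noteq> last q'")
    case True
    then show ?thesis
      using snoc.prems(1) q by (intro exI[of _ p'] exI[of _ q'] exI[of _ x] exI[of _ "[]"]) auto
  next
    case False
    with snoc.prems(1) q have "p' \<noteq> q'" "p' \<noteq> []" "q' \<noteq> []" "last p' = last q'"
      by auto
    then obtain p1 q1 w r where "p' = p1 @ w # r" "q' = q1 @ w # r" "p1 \<noteq> q1"
      "p1 = [] \<or> q1 = [] \<or> last p1 \<noteq> last q1"
      using snoc.IH by blast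
    then show ?thesis
      using q by (intro exI[of _ p1] exI[of _ q1] exI[of _ w] exI[of _ "r @ [x]"]) auto
  qed
qed simp

lemma distinct_paths_merge:
  assumes "distinct p" "distinct q" "p \<noteq> q" "p \<noteq> []" "q \<noteq> []" "hd p = hd q" "last p = last q"
  obtains p1 q1 w r where "p = p1 @ w # r" "q = q1 @ w # r" "p1 \<noteq> []" "q1 \<noteq> []"
    "last p1 \<noteq> last q1"
proof -
  obtain p1 q1 w r where p: "p = p1 @ w # r" and q: "q = q1 @ w # r" and "p1 \<noteq> q1"
    and ends: "p1 = [] \<or> q1 = [] \<or> last p1 \<noteq> last q1"
    using common_suffix_split[OF assms(3-5,7)] by blast
  have "p1 \<noteq> []"
  proof
    assume "p1 = []"
    then have "q1 \<noteq> []" "hd q1 = w"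
      using \<open>p1 \<noteq> q1\<close> assms(6) p q by auto
    then have "w \<in> set q1"
      using hd_in_set[of q1] by simp
    then show False
      using assms(2) q by simp
  qed
  moreover have "q1 \<noteq> []"
  proof
    assume "q1 = []"
    then have "p1 \<noteq> []" "hd p1 = w"
      using \<open>p1 \<noteq> q1\<close> assms(6) p q by auto
    then have "w \<in> set p1"
      using hd_in_set[of p1] by simp
    then show False
      using assms(1) p by simp
  qed
  ultimately show ?thesis
    using that p q ends by blast
qed

lemma is_path_splice:
  assumes x: "is_path E s w x" and r: "is_path E w v (w # r)"
  obtains xa z xb ra rb where "x = xa @ z # xb" "w # r = ra @ z # rb" "is_path E s v (xa @ z # rb)"
proof -
  have "\<exists>z\<in>set x. z \<in> set (w # r)"
    using x by (auto simp: is_path_def)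
  then obtain xa z xb where x_eq: "x = xa @ z # xb" and z: "z \<in> set (w # r)"
    and xa: "\<forall>u\<in>set xa. u \<notin> set (w # r)"
    by (rule split_list_first_propE)
  obtain ra rb where r_eq: "w # r = ra @ z # rb"
    using split_list[OF z] by blast
  have "is_path E s z (xa @ [z])"
    using x unfolding x_eq is_path_append_iff[of E s w xa z xb] by blast
  moreover have "is_path E z v (z # rb)"
    using r unfolding r_eq is_path_append_iff[of E w v ra z rb] by blast
  moreover have "set xa \<inter> set rb = {}"
    using xa r_eq by auto
  ultimately have "is_path E s v (xa @ z # rb)"
    unfolding is_path_append_iff[of E s v xa z rb] by blast
  with x_eq r_eq show ?thesis
    by (rule that)
qed


definition path_sum :: "('v \<times> 'v \<Rightarrow> 'a::comm_monoid_add) \<Rightarrow> 'v list \<Rightarrow> 'a" where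
  "path_sum g p = sum_list (map g (path_edges p))"

lemma plen_eq_path_sum: "plen l = path_sum l"
  by (rule ext) (simp add: plen_def path_sum_def)

lemma pnu_eq_path_sum: "pnu \<rho> = path_sum \<rho>"
  by (rule ext) (simp add: pnu_def path_sum_def)

lemma path_sum_append: "path_sum g (xs @ y # ys) = path_sum g (xs @ [y]) + path_sum g (y # ys)"
  by (simp add: path_sum_def path_edges_append[of xs y ys])

lemma path_sum_snoc: "xs \<noteq> [] \<Longrightarrow> path_sum g (xs @ [y]) = path_sum g xs + g (last xs, y)"
  by (simp add: path_sum_def path_edges_snoc)

lemma path_sum_rev: "path_sum g (rev p) = path_sum (g \<circ> prod.swap) p"
  by (simp add: path_sum_def path_edges_rev rev_map[symmetric] sum_list_rev)

lemma path_sum_nonneg: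
  fixes g :: "'v \<times> 'v \<Rightarrow> 'a::ordered_comm_monoid_add"
  shows "(\<And>e. e \<in> set (path_edges p) \<Longrightarrow> 0 \<le> g e) \<Longrightarrow> 0 \<le> path_sum g p"
  unfolding path_sum_def by (rule sum_list_nonneg) auto

lemma path_sum_splice_le:
  fixes g :: "'v \<times> 'v \<Rightarrow> 'a::ordered_comm_monoid_add"
  assumes "\<And>e. e \<in> set (path_edges (xa @ z # xb)) \<union> set (path_edges (ya @ z # yb)) \<Longrightarrow> 0 \<le> g e"
  shows "path_sum g (xa @ z # yb) \<le> path_sum g (xa @ z # xb) + path_sum g (ya @ z # yb)"
proof -
  have "0 \<le> path_sum g (z # xb)" and "0 \<le> path_sum g (ya @ [z])"
    using assms by (auto simp: path_edges_append[of xa z xb] path_edges_append[of ya z yb]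
        intro!: path_sum_nonneg)
  then have "path_sum g (xa @ [z]) + path_sum g (z # yb)
      \<le> (path_sum g (xa @ [z]) + path_sum g (z # xb)) + (path_sum g (ya @ [z]) + path_sum g (z # yb))"
    by (intro add_mono add_increasing2[OF _ order.refl] add_increasing[OF _ order.refl])
  then show ?thesis
    by (simp only: path_sum_append[of g xa z yb] path_sum_append[of g xa z xb]
        path_sum_append[of g ya z yb])
qed

lemma path_sum_eq_if_agree_off:
  assumes "\<And>d. d \<noteq> e \<Longrightarrow> g d = g' d" "e \<notin> set (path_edges p)"
  shows "path_sum g p = path_sum g' p"
proof -
  have "map g (path_edges p) = map g' (path_edges p)"
    using assms(2) by (intro map_cong refl assms(1)) auto
  then show ?thesis
    by (simp only: path_sum_def)
qed

lemma path_sum_shift_if_agree_off: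
  fixes g g' :: "'v \<times> 'v \<Rightarrow> 'a::comm_monoid_add"
  assumes "distinct p" "\<And>d. d \<noteq> e \<Longrightarrow> g d = g' d" "e \<in> set (path_edges p)"
  shows "path_sum g p + g' e = path_sum g' p + g e"
proof -
  let ?S = "set (path_edges p)"
  have "distinct (path_edges p)"
    using assms(1) by (rule distinct_path_edges)
  then have sum: "path_sum h p = h e + sum h (?S - {e})" for h :: "'v \<times> 'v \<Rightarrow> 'a"
    using assms(3) by (simp add: path_sum_def sum_list_distinct_conv_sum_set sum.remove)
  have "sum g (?S - {e}) = sum g' (?S - {e})"
    using assms(2) by (intro sum.cong) auto
  then show ?thesis
    unfolding sum[of g] sum[of g'] by (simp only: ac_simps)
qed

lemma path_shorter_extend:
  assumes "path_shorter l \<rho> x x'"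
    and "plen l y \<le> plen l x + c" "pnu \<rho> y \<le> pnu \<rho> x + d"
    and "plen l p = plen l x' + c" "pnu \<rho> p = pnu \<rho> x' + d"
  shows "path_shorter l \<rho> y p"
  using assms unfolding path_shorter_def by (cases "plen l y = plen l p") auto


section \<open>Crossings of the region boundary\<close>

definition crosses_frontier :: "('v \<Rightarrow> real \<times> real) \<Rightarrow> (real \<times> real) set \<Rightarrow> 'v \<times> 'v \<Rightarrow> bool" where
  "crosses_frontier pos B = (\<lambda>(u, w). closed_segment (pos u) (pos w) \<inter> frontier B \<noteq> {})"

definition crossings :: "('v \<Rightarrow> real \<times> real) \<Rightarrow> (real \<times> real) set \<Rightarrow> 'v list \<Rightarrow> nat" where
  "crossings pos B p = length (filter (crosses_frontier pos B) (path_edges p))"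

lemma local_path_iff_crossings:
  "local_path pos E B s t p \<longleftrightarrow> is_path E s t p \<and> crossings pos B p \<le> 1"
  by (simp add: local_path_def crossings_def crosses_frontier_def)

lemma crossings_eq_path_sum:
  "crossings pos B = path_sum (\<lambda>e. if crosses_frontier pos B e then 1 else 0)"
proof
  fix p
  have "length (filter P es) = sum_list (map (\<lambda>e. if P e then 1 else 0) es)"
    for P :: "'v \<times> 'v \<Rightarrow> bool" and es
    by (induction es) auto
  from this[of "crosses_frontier pos B" "path_edges p"]
  show "crossings pos B p = path_sum (\<lambda>e. if crosses_frontier pos B e then 1 else 0) p"
    by (simp only: crossings_def path_sum_def)
qed

lemma crossings_append:
  "crossings pos B (xs @ y # ys) = crossings pos B (xs @ [y]) + crossings pos B (y # ys)"
  by (simp add: crossings_eq_path_sum path_sum_append[of _ xs y ys])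

lemma crossings_rev: "crossings pos B (rev p) = crossings pos B p"
proof -
  have "crosses_frontier pos B (prod.swap e) = crosses_frontier pos B e" for e
    by (cases e) (simp add: crosses_frontier_def closed_segment_commute)
  then show ?thesis
    by (simp add: crossings_eq_path_sum path_sum_rev comp_def)
qed

lemma local_path_rev_iff: "local_path pos (E\<inverse>) B t s (rev p) \<longleftrightarrow> local_path pos E B s t p"
  by (simp add: local_path_iff_crossings is_path_rev_iff crossings_rev)

lemma closed_segment_interior_frontier_disjoint:
  fixes a b :: "'a::real_normed_vector"
  assumes "convex B" "a \<in> interior B" "b \<in> interior B"
  shows "closed_segment a b \<inter> frontier B = {}"
proof -
  have "closed_segment a b \<subseteq> interior B"
    by (rule closed_segment_subset[OF assms(2,3) convex_interior[OF assms(1)]])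
  then show ?thesis
    by (auto simp: frontier_def)
qed

lemma closed_segment_frontier_disjoint_interior_iff:
  fixes a b :: "'a::real_normed_vector"
  assumes "closed_segment a b \<inter> frontier B = {}"
  shows "a \<in> interior B \<longleftrightarrow> b \<in> interior B"
proof -
  have *: "b \<in> interior B" if "closed_segment a b \<inter> frontier B = {}" "a \<in> interior B" for a b
  proof (rule ccontr)
    assume "b \<notin> interior B"
    with that(2) have "closed_segment a b \<inter> frontier (interior B) \<noteq> {}"
      by (intro connected_Int_frontier) auto
    with that(1) show False
      using frontier_interior_subset by blast
  qed
  have "closed_segment b a \<inter> frontier B = {}"
    using assms by (simp add: closed_segment_commute)
  with assms show ?thesis
    using *[of a b] *[of b a] by blast
qed

text \<open>Convexity rules out an edge that leaves the interior of \<open>B\<close> and re-enters it, so the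
  number of crossings of a local path starting inside is determined by where it ends.\<close>

lemma crossings_from_interior:
  assumes "convex B" "p \<noteq> []" "pos (hd p) \<in> interior B" "crossings pos B p \<le> 1"
  shows "crossings pos B p = (if pos (last p) \<in> interior B then 0 else 1)"
  using assms(2-)
proof (induction p rule: rev_induct)
  case (snoc t x)
  show ?case
  proof (cases "x = []")
    case True
    with snoc.prems show ?thesis
      by (simp add: crossings_def)
  next
    case False
    let ?c = "crosses_frontier pos B (last x, t)"
    have step: "crossings pos B (x @ [t]) = crossings pos B x + (if ?c then 1 else 0)"
      using False by (simp add: crossings_eq_path_sum path_sum_snoc)
    have IH: "crossings pos B x = (if pos (last x) \<in> interior B then 0 else 1)"
      using snoc False step by auto
    show ?thesis
    proof (cases "pos (last x) \<in> interior B")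
      case True
      have "?c \<longleftrightarrow> pos t \<notin> interior B"
      proof
        assume ?c
        show "pos t \<notin> interior B"
        proof
          assume "pos t \<in> interior B"
          with \<open>?c\<close> show False
            using closed_segment_interior_frontier_disjoint[OF assms(1) True]
            by (simp add: crosses_frontier_def)
        qed
      next
        assume "pos t \<notin> interior B"
        then show ?c
          using closed_segment_frontier_disjoint_interior_iff[of "pos (last x)" "pos t" B] True
          by (auto simp: crosses_frontier_def)
      qed
      then show ?thesis
        using step IH True by (cases ?c) simp_all
    next
      case False
      then have "\<not> ?c"
        using step IH snoc.prems(3) by auto
      then have "pos t \<notin> interior B"
        using False closed_segment_frontier_disjoint_interior_iff[of "pos (last x)" "pos t" B]
        by (auto simp: crosses_frontier_def)
      then show ?thesis
        using step IH False \<open>\<not> ?c\<close> by simp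
    qed
  qed
qed simp

lemma crossings_from_frontier:
  assumes "pos x \<in> frontier B"
  shows "1 \<le> crossings pos B (x # y # r)"
proof -
  have "crosses_frontier pos B (x, y)"
    using assms ends_in_segment(1)[of "pos x" "pos y"] by (auto simp: crosses_frontier_def)
  then show ?thesis
    by (simp add: crossings_def)
qed

lemma local_path_crossings_eq:
  assumes "convex B" "pos s \<in> closure B"
    and p: "local_path pos E B s t p" and q: "local_path pos E B s t q"
  shows "crossings pos B p = crossings pos B q"
proof (cases "pos s \<in> interior B")
  case True
  have "crossings pos B u = (if pos t \<in> interior B then 0 else 1)" if "local_path pos E B s t u" for u
    using crossings_from_interior[OF assms(1), of u] that True
    by (auto simp: local_path_iff_crossings is_path_def)
  then show ?thesis
    using p q by simp
next
  case False
  with assms(2) have s: "pos s \<in> frontier B"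
    by (simp add: frontier_def)
  have paths: "is_path E s t p" "is_path E s t q"
    using p q by (simp_all add: local_path_iff_crossings)
  show ?thesis
  proof (cases "s = t")
    case True
    then show ?thesis
      using paths is_path_same_ends[of E s p] is_path_same_ends[of E s q] by simp
  next
    case False
    obtain y r where "p = s # y # r"
      by (rule is_path_distinct_ends[OF paths(1) False])
    moreover obtain y' r' where "q = s # y' # r'"
      by (rule is_path_distinct_ends[OF paths(2) False])
    ultimately have "1 \<le> crossings pos B p" "1 \<le> crossings pos B q"
      using crossings_from_frontier[of pos s B, OF s] by simp_all
    then show ?thesis
      using p q by (simp add: local_path_iff_crossings)
  qed
qed


lemma local_shortest_plen_eq:
  "local_shortest pos E l \<rho> B x y p \<Longrightarrow> local_shortest pos E l \<rho>' B x y q \<Longrightarrow> plen l p = plen l q"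
  unfolding local_shortest_def path_shorter_def by (meson linorder_neqE_linordered_idom)

lemma local_shortest_pnu_le:
  assumes "local_shortest pos E l \<rho> B x y p" "local_shortest pos E l \<rho>' B x y q"
  shows "pnu \<rho> p \<le> pnu \<rho> q"
proof -
  have "plen l q = plen l p"
    using local_shortest_plen_eq[OF assms(2,1)] .
  moreover have "\<not> path_shorter l \<rho> q p"
    using assms unfolding local_shortest_def by blast
  ultimately show ?thesis
    by (auto simp: path_shorter_def)
qed

text \<open>A better local path \<open>x\<close> to \<open>w\<close> is spliced into the rest of the path at the first
  node where they meet. The splice is again local because \<open>x\<close> crosses the boundary as often
  as the prefix it replaces, and it is not longer because lengths are nonnegative.\<close>

lemma local_shortest_prefix:
  assumes B: "convex B" "pos s \<in> closure B" and l_nonneg: "\<forall>e\<in>E. 0 \<le> l e"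
    and shortest: "local_shortest pos E l \<rho> B s v (p @ w # r)"
  shows "local_shortest pos E l \<rho> B s w (p @ [w])"
proof -
  have "is_path E s v (p @ w # r)" and "crossings pos B (p @ w # r) \<le> 1"
    using shortest by (simp_all add: local_shortest_def local_path_iff_crossings)
  then have prefix_path: "is_path E s w (p @ [w])" and suffix_path: "is_path E w v (w # r)"
    and crossings: "crossings pos B (p @ [w]) + crossings pos B (w # r) \<le> 1"
    by (simp_all add: is_path_append_iff[of E s v p w r] crossings_append[of pos B p w r])
  then have prefix: "local_path pos E B s w (p @ [w])"
    by (simp add: local_path_iff_crossings)
  show ?thesis
    unfolding local_shortest_def
  proof (intro conjI prefix notI, elim exE conjE)
    fix x
    assume x: "local_path pos E B s w x" and shorter: "path_shorter l \<rho> x (p @ [w])"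
    then have x_path: "is_path E s w x"
      by (simp add: local_path_iff_crossings)
    then obtain xa z xb ra rb where x_eq: "x = xa @ z # xb" and r_eq: "w # r = ra @ z # rb"
      and "is_path E s v (xa @ z # rb)"
      using suffix_path by (rule is_path_splice)
    define y where "y = xa @ z # rb"
    have "is_path E s v y"
      unfolding y_def by fact
    moreover have "crossings pos B y \<le> crossings pos B x + crossings pos B (w # r)"
      unfolding y_def x_eq r_eq crossings_eq_path_sum by (rule path_sum_splice_le) simp
    moreover have "crossings pos B x = crossings pos B (p @ [w])"
      using local_path_crossings_eq[OF B x prefix] .
    ultimately have "local_path pos E B s v y"
      using crossings by (simp add: local_path_iff_crossings)
    moreover have "path_shorter l \<rho> y (p @ w # r)"
    proof (rule path_shorter_extend[OF shorter])
      have "set (path_edges x) \<union> set (path_edges (w # r)) \<subseteq> E"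
        using x_path suffix_path by (auto simp: is_path_def)
      then show "plen l y \<le> plen l x + plen l (w # r)"
        unfolding y_def x_eq r_eq plen_eq_path_sum using l_nonneg
        by (intro path_sum_splice_le) auto
      show "pnu \<rho> y \<le> pnu \<rho> x + pnu \<rho> (w # r)"
        unfolding y_def x_eq r_eq pnu_eq_path_sum by (rule path_sum_splice_le) simp
      show "plen l (p @ w # r) = plen l (p @ [w]) + plen l (w # r)"
        by (simp add: plen_eq_path_sum path_sum_append[of l p w r])
      show "pnu \<rho> (p @ w # r) = pnu \<rho> (p @ [w]) + pnu \<rho> (w # r)"
        by (simp add: pnu_eq_path_sum path_sum_append[of \<rho> p w r])
    qed
    ultimately show False
      using shortest by (auto simp: local_shortest_def)
  qed
qed


section \<open>Ties between local shortest paths\<close>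

definition lsp_edge_tie ::
  "('v \<Rightarrow> real \<times> real) \<Rightarrow> ('v \<times> 'v) set \<Rightarrow> ('v \<times> 'v \<Rightarrow> real) \<Rightarrow> ('v \<times> 'v \<Rightarrow> nat) \<Rightarrow>
   (real \<times> real) set \<Rightarrow> 'v \<Rightarrow> 'v \<Rightarrow> 'v \<times> 'v \<Rightarrow> bool" where
  "lsp_edge_tie pos E l \<rho> B x y e \<longleftrightarrow>
     (\<exists>p q. local_shortest pos E l \<rho> B x y p \<and> local_shortest pos E l \<rho> B x y q \<and>
            pnu \<rho> p = pnu \<rho> q \<and> e \<in> set (path_edges p) \<and> e \<notin> set (path_edges q))"

lemma lsp_not_unique_imp_edge_ties:
  assumes B: "convex B" "pos s \<in> closure B" and l_nonneg: "\<forall>e\<in>E. 0 \<le> l e"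
    and "lsp_not_unique pos E l \<rho> B s v"
  obtains e e' where "e \<in> E" "e' \<in> E" "e \<noteq> e'" "snd e = snd e'"
    "lsp_edge_tie pos E l \<rho> B s (snd e) e" "lsp_edge_tie pos E l \<rho> B s (snd e') e'"
proof -
  obtain p q where "p \<noteq> q" and p: "local_shortest pos E l \<rho> B s v p"
    and q: "local_shortest pos E l \<rho> B s v q" and nuance: "pnu \<rho> p = pnu \<rho> q"
    using assms(4) by (auto simp: lsp_not_unique_def)
  then have p_path: "is_path E s v p" and q_path: "is_path E s v q"
    by (simp_all add: local_shortest_def local_path_iff_crossings)
  then have "distinct p" "distinct q" "p \<noteq> []" "q \<noteq> []" "hd p = hd q" "last p = last q"
    by (simp_all add: is_path_def)
  then obtain p1 q1 w r where p_eq: "p = p1 @ w # r" and q_eq: "q = q1 @ w # r"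
    and "p1 \<noteq> []" "q1 \<noteq> []" and last_ne: "last p1 \<noteq> last q1"
    using \<open>p \<noteq> q\<close> by (blast elim: distinct_paths_merge)
  let ?P = "p1 @ [w]" and ?Q = "q1 @ [w]"
  have P: "local_shortest pos E l \<rho> B s w ?P" and Q: "local_shortest pos E l \<rho> B s w ?Q"
    using local_shortest_prefix[where pos = pos and s = s, OF B l_nonneg] p q
    unfolding p_eq q_eq by blast+
  have "pnu \<rho> ?P = pnu \<rho> ?Q"
    using nuance unfolding p_eq q_eq pnu_eq_path_sum
      path_sum_append[of \<rho> p1 w r] path_sum_append[of \<rho> q1 w r] by simp
  moreover have edges: "path_edges ?P = path_edges p1 @ [(last p1, w)]"
    "path_edges ?Q = path_edges q1 @ [(last q1, w)]"
    using \<open>p1 \<noteq> []\<close> \<open>q1 \<noteq> []\<close> by (simp_all add: path_edges_snoc)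
  moreover have "w \<notin> set p1" "w \<notin> set q1"
    using p_path q_path unfolding p_eq q_eq is_path_def by auto
  then have "(last p1, w) \<notin> set (path_edges ?Q)" "(last q1, w) \<notin> set (path_edges ?P)"
    using last_ne edges by (auto dest: mem_path_edgesD)
  moreover have "(last p1, w) \<in> E" "(last q1, w) \<in> E"
    using P Q edges by (auto simp: local_shortest_def local_path_iff_crossings is_path_def)
  ultimately show ?thesis
    using that[of "(last p1, w)" "(last q1, w)"] last_ne P Q
    unfolding lsp_edge_tie_def by fastforce
qed

text \<open>Raising \<open>\<rho> e\<close> makes the optimal paths through \<open>e\<close> strictly worse than the tied one
  avoiding it; lowering it makes them strictly better. So at most one value of \<open>\<rho> e\<close> ties.\<close>

lemma lsp_edge_tie_determines_nuance:
  assumes tie: "lsp_edge_tie pos E l \<rho> B x y e" and tie': "lsp_edge_tie pos E l \<rho>' B x y e"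
    and agree: "\<And>d. d \<noteq> e \<Longrightarrow> \<rho> d = \<rho>' d"
  shows "\<rho> e = \<rho>' e"
proof -
  obtain p q where p: "local_shortest pos E l \<rho> B x y p" and q: "local_shortest pos E l \<rho> B x y q"
    and "pnu \<rho> p = pnu \<rho> q" "e \<in> set (path_edges p)" "e \<notin> set (path_edges q)"
    using tie by (auto simp: lsp_edge_tie_def)
  obtain p' q' where p': "local_shortest pos E l \<rho>' B x y p'"
    and q': "local_shortest pos E l \<rho>' B x y q'"
    and "pnu \<rho>' p' = pnu \<rho>' q'" "e \<in> set (path_edges p')" "e \<notin> set (path_edges q')"
    using tie' by (auto simp: lsp_edge_tie_def)
  have "distinct p" "distinct p'"
    using p p' by (auto simp: local_shortest_def local_path_iff_crossings is_path_def)
  have "pnu \<rho> q = pnu \<rho>' q" "pnu \<rho> q' = pnu \<rho>' q'"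
    unfolding pnu_eq_path_sum using agree \<open>e \<notin> set (path_edges q)\<close> \<open>e \<notin> set (path_edges q')\<close>
    by (blast intro: path_sum_eq_if_agree_off)+
  moreover have "pnu \<rho> p + \<rho>' e = pnu \<rho>' p + \<rho> e" "pnu \<rho> p' + \<rho>' e = pnu \<rho>' p' + \<rho> e"
    unfolding pnu_eq_path_sum using agree \<open>distinct p\<close> \<open>distinct p'\<close>
      \<open>e \<in> set (path_edges p)\<close> \<open>e \<in> set (path_edges p')\<close>
    by (blast intro: path_sum_shift_if_agree_off)+
  moreover have "pnu \<rho> p \<le> pnu \<rho> q'" "pnu \<rho> p \<le> pnu \<rho> p'"
    "pnu \<rho>' p' \<le> pnu \<rho>' q" "pnu \<rho>' p' \<le> pnu \<rho>' p"
    using p q' p' q by (blast intro: local_shortest_pnu_le)+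
  ultimately show ?thesis
    using \<open>pnu \<rho> p = pnu \<rho> q\<close> \<open>pnu \<rho>' p' = pnu \<rho>' q'\<close> by linarith
qed


lemma plen_rev: "plen (l \<circ> prod.swap) (rev p) = plen l p"
  by (simp add: plen_eq_path_sum path_sum_rev comp_assoc)

lemma pnu_rev: "pnu (\<rho> \<circ> prod.swap) (rev p) = pnu \<rho> p"
  by (simp add: pnu_eq_path_sum path_sum_rev comp_assoc)

lemma local_shortest_rev_iff:
  "local_shortest pos (E\<inverse>) (l \<circ> prod.swap) (\<rho> \<circ> prod.swap) B t s (rev p) \<longleftrightarrow>
   local_shortest pos E l \<rho> B s t p"
proof -
  have "path_shorter (l \<circ> prod.swap) (\<rho> \<circ> prod.swap) (rev q) (rev p) \<longleftrightarrow> path_shorter l \<rho> q p" for q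
    by (simp add: path_shorter_def plen_rev pnu_rev)
  then have "(\<exists>q. local_path pos (E\<inverse>) B t s q \<and>
        path_shorter (l \<circ> prod.swap) (\<rho> \<circ> prod.swap) q (rev p)) \<longleftrightarrow>
      (\<exists>q. local_path pos E B s t q \<and> path_shorter l \<rho> q p)"
    by (metis local_path_rev_iff rev_rev_ident)
  then show ?thesis
    by (simp add: local_shortest_def local_path_rev_iff)
qed

lemma lsp_not_unique_rev:
  "lsp_not_unique pos E l \<rho> B s t \<Longrightarrow>
   lsp_not_unique pos (E\<inverse>) (l \<circ> prod.swap) (\<rho> \<circ> prod.swap) B t s"
  unfolding lsp_not_unique_def by (metis local_shortest_rev_iff plen_rev pnu_rev rev_rev_ident)

lemma lsp_edge_tie_rev:
  assumes "lsp_edge_tie pos (E\<inverse>) (l \<circ> prod.swap) (\<rho> \<circ> prod.swap) B t s e"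
  shows "lsp_edge_tie pos E l \<rho> B s t (prod.swap e)"
proof -
  obtain p q where "local_shortest pos (E\<inverse>) (l \<circ> prod.swap) (\<rho> \<circ> prod.swap) B t s p"
    "local_shortest pos (E\<inverse>) (l \<circ> prod.swap) (\<rho> \<circ> prod.swap) B t s q"
    "pnu (\<rho> \<circ> prod.swap) p = pnu (\<rho> \<circ> prod.swap) q"
    "e \<in> set (path_edges p)" "e \<notin> set (path_edges q)"
    using assms by (auto simp: lsp_edge_tie_def)
  moreover have "prod.swap e \<in> set (path_edges (rev u)) \<longleftrightarrow> e \<in> set (path_edges u)" for u
    by (cases e) (auto simp: path_edges_rev)
  ultimately have "local_shortest pos E l \<rho> B s t (rev p)" "local_shortest pos E l \<rho> B s t (rev q)"
    "pnu \<rho> (rev p) = pnu \<rho> (rev q)"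
    "prod.swap e \<in> set (path_edges (rev p))" "prod.swap e \<notin> set (path_edges (rev q))"
    using local_shortest_rev_iff[of pos E l \<rho> B t s "rev p"]
      local_shortest_rev_iff[of pos E l \<rho> B t s "rev q"]
      pnu_rev[of \<rho> "rev p"] pnu_rev[of \<rho> "rev q"]
    by simp_all
  then show ?thesis
    unfolding lsp_edge_tie_def by blast
qed

lemma lsp_not_unique_into_imp_edge_ties:
  assumes B: "convex B" "pos s \<in> closure B" and l_nonneg: "\<forall>e\<in>E. 0 \<le> l e"
    and "lsp_not_unique pos E l \<rho> B v s"
  obtains e e' where "e \<in> E" "e' \<in> E" "e \<noteq> e'" "fst e = fst e'"
    "lsp_edge_tie pos E l \<rho> B (fst e) s e" "lsp_edge_tie pos E l \<rho> B (fst e') s e'"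
proof -
  have "\<forall>e\<in>E\<inverse>. 0 \<le> (l \<circ> prod.swap) e"
    using l_nonneg by auto
  then obtain e e' where "e \<in> E\<inverse>" "e' \<in> E\<inverse>" "e \<noteq> e'" "snd e = snd e'"
    "lsp_edge_tie pos (E\<inverse>) (l \<circ> prod.swap) (\<rho> \<circ> prod.swap) B s (snd e) e"
    "lsp_edge_tie pos (E\<inverse>) (l \<circ> prod.swap) (\<rho> \<circ> prod.swap) B s (snd e') e'"
    using lsp_not_unique_imp_edge_ties[OF B _ lsp_not_unique_rev[OF assms(4)]] by blast
  then show ?thesis
    using that[of "prod.swap e" "prod.swap e'"] lsp_edge_tie_rev by fastforce
qed


section \<open>Probability bounds\<close>

text \<open>Resetting the coordinate \<open>e\<close> to \<open>0\<close> is injective on \<open>A\<close> and \<open>\<tau>\<close>-to-one on the whole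
  sample space.\<close>

lemma prob_coordinate_determined_le:
  fixes A :: "('e \<Rightarrow> nat) set"
  assumes "finite E" "e \<in> E" "0 < \<tau>"
    and determined: "\<And>\<rho> \<rho>'. \<rho> \<in> A \<Longrightarrow> \<rho>' \<in> A \<Longrightarrow> (\<And>d. d \<noteq> e \<Longrightarrow> \<rho> d = \<rho>' d) \<Longrightarrow> \<rho> e = \<rho>' e"
  shows "measure_pmf.prob (Pi_pmf E 0 (\<lambda>_. pmf_of_set {..<\<tau>})) A \<le> 1 / real \<tau>"
proof -
  define F where "F = PiE_dflt E 0 (\<lambda>_. {..<\<tau>})"
  define G where "G = {f \<in> F. f e = 0}"
  have M: "Pi_pmf E 0 (\<lambda>_. pmf_of_set {..<\<tau>}) = pmf_of_set F"
    unfolding F_def using assms(1,3) by (intro Pi_pmf_of_set) auto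
  have "finite F"
    unfolding F_def using assms(1) by (intro finite_PiE_dflt) auto
  have "(\<lambda>_. 0) \<in> F"
    unfolding F_def PiE_dflt_def using assms(3) by auto
  then have "F \<noteq> {}" "G \<noteq> {}"
    by (auto simp: G_def)
  have "bij_betw (\<lambda>(y, f). f(e := y)) ({..<\<tau>} \<times> G) F"
    by (rule bij_betw_byWitness[where f' = "\<lambda>f. (f e, f(e := 0))"])
      (use assms(2,3) in \<open>auto simp: G_def F_def PiE_dflt_def\<close>)
  then have card_F: "card F = \<tau> * card G"
    by (simp add: bij_betw_same_card[symmetric] card_cartesian_product)
  have "card (F \<inter> A) \<le> card G"
  proof (rule card_inj_on_le[where f = "\<lambda>f. f(e := 0)"])
    show "inj_on (\<lambda>f. f(e := 0)) (F \<inter> A)"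
    proof (rule inj_onI)
      fix f g
      assume "f \<in> F \<inter> A" "g \<in> F \<inter> A" and eq: "f(e := 0) = g(e := 0)"
      then have "f e = g e"
        using determined by (metis IntD2 fun_upd_other)
      with eq show "f = g"
        by (metis fun_upd_triv fun_upd_upd)
    qed
    show "(\<lambda>f. f(e := 0)) ` (F \<inter> A) \<subseteq> G"
      using assms(2,3) by (auto simp: G_def F_def PiE_dflt_def)
    show "finite G"
      using \<open>finite F\<close> by (simp add: G_def)
  qed
  then have "real (card (F \<inter> A)) / real (card F) \<le> 1 / real \<tau>"
    using assms(3) \<open>G \<noteq> {}\<close> \<open>finite F\<close> by (simp add: card_F G_def divide_simps)
  then show ?thesis
    by (simp add: M measure_pmf_of_set[OF \<open>F \<noteq> {}\<close> \<open>finite F\<close>])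
qed

lemma prob_lsp_edge_tie_le:
  assumes "finite E" "e \<in> E" "0 < \<tau>"
  shows "measure_pmf.prob (Pi_pmf E 0 (\<lambda>_. pmf_of_set {..<\<tau>}))
           {\<rho>. lsp_edge_tie pos E l \<rho> B x y e} \<le> 1 / real \<tau>"
  using assms by (intro prob_coordinate_determined_le) (auto intro: lsp_edge_tie_determines_nuance)

lemma prob_two_distinct_events_le:
  fixes M :: "'a pmf" and A :: "'e \<Rightarrow> 'a set"
  assumes "finite S" and "\<And>e. e \<in> S \<Longrightarrow> measure_pmf.prob M (A e) \<le> c"
  shows "measure_pmf.prob M {x. \<exists>e\<in>S. \<exists>e'\<in>S. e \<noteq> e' \<and> x \<in> A e \<and> x \<in> A e'}
           \<le> real (card S - 1) * c"
proof (cases "S = {}")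
  case False
  then obtain e0 where "e0 \<in> S"
    by blast
  have "measure_pmf.prob M {x. \<exists>e\<in>S. \<exists>e'\<in>S. e \<noteq> e' \<and> x \<in> A e \<and> x \<in> A e'}
      \<le> measure_pmf.prob M (\<Union>e\<in>S - {e0}. A e)"
    by (rule measure_pmf.finite_measure_mono) auto
  also have "\<dots> \<le> (\<Sum>e\<in>S - {e0}. measure_pmf.prob M (A e))"
    using assms(1) by (intro measure_pmf.finite_measure_subadditive_finite) auto
  also have "\<dots> \<le> (\<Sum>e\<in>S - {e0}. c)"
    using assms(2) by (intro sum_mono) auto
  also have "\<dots> = real (card S - 1) * c"
    using assms(1) \<open>e0 \<in> S\<close> by simp
  finally show ?thesis .
qed simp

lemma prob_two_events_same_fibre_le:
  fixes M :: "'a pmf" and A :: "'e \<Rightarrow> 'a set" and f :: "'e \<Rightarrow> 'v"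
  assumes "finite V" "finite E" "\<And>e. e \<in> E \<Longrightarrow> f e \<in> V"
    and "\<And>e. e \<in> E \<Longrightarrow> measure_pmf.prob M (A e) \<le> c" "0 \<le> c"
    and "\<And>w. w \<in> V \<Longrightarrow> card {e \<in> E. f e = w} \<le> D"
  shows "measure_pmf.prob M {x. \<exists>e\<in>E. \<exists>e'\<in>E. e \<noteq> e' \<and> f e = f e' \<and> x \<in> A e \<and> x \<in> A e'}
           \<le> real (card V) * real (D - 1) * c"
proof -
  let ?T = "\<lambda>w. {x. \<exists>e\<in>{e \<in> E. f e = w}. \<exists>e'\<in>{e \<in> E. f e = w}. e \<noteq> e' \<and> x \<in> A e \<and> x \<in> A e'}"
  have "measure_pmf.prob M {x. \<exists>e\<in>E. \<exists>e'\<in>E. e \<noteq> e' \<and> f e = f e' \<and> x \<in> A e \<and> x \<in> A e'}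
      \<le> measure_pmf.prob M (\<Union>w\<in>V. ?T w)"
    using assms(3) by (intro measure_pmf.finite_measure_mono) fastforce+
  also have "\<dots> \<le> (\<Sum>w\<in>V. measure_pmf.prob M (?T w))"
    using assms(1) by (intro measure_pmf.finite_measure_subadditive_finite) auto
  also have "\<dots> \<le> (\<Sum>w\<in>V. real (D - 1) * c)"
  proof (rule sum_mono)
    fix w
    assume "w \<in> V"
    have "measure_pmf.prob M (?T w) \<le> real (card {e \<in> E. f e = w} - 1) * c"
      using assms(2,4) by (intro prob_two_distinct_events_le) auto
    also have "\<dots> \<le> real (D - 1) * c"
      using assms(5,6) \<open>w \<in> V\<close> by (intro mult_right_mono) (auto intro: diff_le_mono)
    finally show "measure_pmf.prob M (?T w) \<le> real (D - 1) * c" .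
  qed
  also have "\<dots> = real (card V) * real (D - 1) * c"
    by simp
  finally show ?thesis .
qed

lemma card_incident_edges_le_max_degree:
  assumes "finite V" "finite E" "w \<in> V" "F \<subseteq> {e \<in> E. fst e = w \<or> snd e = w}"
  shows "card F \<le> max_degree V E"
proof -
  have "card F \<le> degree E w"
    unfolding degree_def using assms(2,4) by (intro card_mono) auto
  also have "\<dots> \<le> max_degree V E"
    unfolding max_degree_def using assms(1,3) by (intro Max_ge) auto
  finally show ?thesis .
qed

lemma diff_one_le_choose_two: "n - 1 \<le> n choose 2"
proof (cases n)
  case (Suc k)
  have "2 * k \<le> k + k * k"
    using le_square[of k] by simp
  then have "2 * k div 2 \<le> (k + k * k) div 2"
    by (rule div_le_mono)
  then show ?thesis
    using Suc by (simp add: choose_two)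
qed simp

lemma is_4x4_region_convex: "is_4x4_region x0 y0 L m B \<Longrightarrow> convex B"
  by (auto simp: is_4x4_region_def intro!: convex_Times)


lemma prob_edge_tie_pairs_le:
  assumes "finite V" "E \<subseteq> V \<times> V" "0 < \<tau>" "f = fst \<or> f = snd"
  shows "measure_pmf.prob (Pi_pmf E 0 (\<lambda>_. pmf_of_set {..<\<tau>}))
           {\<rho>. \<exists>e\<in>E. \<exists>e'\<in>E. e \<noteq> e' \<and> f e = f e' \<and>
                 lsp_edge_tie pos E l \<rho> B (x e) (y e) e \<and> lsp_edge_tie pos E l \<rho> B (x e') (y e') e'}
         \<le> real (card V) * real (max_degree V E - 1) / real \<tau>"
proof -
  have "finite E"
    using assms(1,2) finite_subset by blast
  have "measure_pmf.prob (Pi_pmf E 0 (\<lambda>_. pmf_of_set {..<\<tau>}))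
           {\<rho>. \<exists>e\<in>E. \<exists>e'\<in>E. e \<noteq> e' \<and> f e = f e' \<and>
                 \<rho> \<in> {\<rho>. lsp_edge_tie pos E l \<rho> B (x e) (y e) e} \<and>
                 \<rho> \<in> {\<rho>. lsp_edge_tie pos E l \<rho> B (x e') (y e') e'}}
         \<le> real (card V) * real (max_degree V E - 1) * (1 / real \<tau>)"
  proof (rule prob_two_events_same_fibre_le)
    show "measure_pmf.prob (Pi_pmf E 0 (\<lambda>_. pmf_of_set {..<\<tau>}))
        {\<rho>. lsp_edge_tie pos E l \<rho> B (x e) (y e) e} \<le> 1 / real \<tau>" if "e \<in> E" for e
      using \<open>finite E\<close> that assms(3) by (rule prob_lsp_edge_tie_le)
    show "card {e \<in> E. f e = w} \<le> max_degree V E" if "w \<in> V" for w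
      using assms(1,4) \<open>finite E\<close> that by (intro card_incident_edges_le_max_degree) auto
  qed (use assms \<open>finite E\<close> in auto)
  then show ?thesis
    by simp
qed

lemma prob_lsp_not_unique_from_le:
  assumes "finite V" "E \<subseteq> V \<times> V" "\<forall>e\<in>E. 0 \<le> l e" "0 < \<tau>"
    and B: "convex B" "pos s \<in> closure B"
  shows "measure_pmf.prob (Pi_pmf E 0 (\<lambda>_. pmf_of_set {..<\<tau>}))
           {\<rho>. \<exists>v. lsp_not_unique pos E l \<rho> B s v}
         \<le> real (card V) * real (max_degree V E - 1) / real \<tau>"
proof -
  have "{\<rho>. \<exists>v. lsp_not_unique pos E l \<rho> B s v} \<subseteq>
      {\<rho>. \<exists>e\<in>E. \<exists>e'\<in>E. e \<noteq> e' \<and> snd e = snd e' \<and>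
            lsp_edge_tie pos E l \<rho> B s (snd e) e \<and> lsp_edge_tie pos E l \<rho> B s (snd e') e'}"
    (is "_ \<subseteq> ?ties")
  proof
    fix \<rho>
    assume "\<rho> \<in> {\<rho>. \<exists>v. lsp_not_unique pos E l \<rho> B s v}"
    then obtain v where "lsp_not_unique pos E l \<rho> B s v"
      by blast
    then obtain e e' where "e \<in> E" "e' \<in> E" "e \<noteq> e'" "snd e = snd e'"
      "lsp_edge_tie pos E l \<rho> B s (snd e) e" "lsp_edge_tie pos E l \<rho> B s (snd e') e'"
      by (rule lsp_not_unique_imp_edge_ties[where pos = pos and s = s, OF B assms(3)])
    then show "\<rho> \<in> ?ties"
      by blast
  qed
  then have "measure_pmf.prob (Pi_pmf E 0 (\<lambda>_. pmf_of_set {..<\<tau>})) {\<rho>. \<exists>v. lsp_not_unique pos E l \<rho> B s v}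
      \<le> measure_pmf.prob (Pi_pmf E 0 (\<lambda>_. pmf_of_set {..<\<tau>})) ?ties"
    by (rule measure_pmf.finite_measure_mono) simp
  also have "\<dots> \<le> real (card V) * real (max_degree V E - 1) / real \<tau>"
    by (rule prob_edge_tie_pairs_le[OF assms(1,2,4), of snd pos l B "\<lambda>_. s" snd]) simp
  finally show ?thesis .
qed

lemma prob_lsp_not_unique_into_le:
  assumes "finite V" "E \<subseteq> V \<times> V" "\<forall>e\<in>E. 0 \<le> l e" "0 < \<tau>"
    and B: "convex B" "pos s \<in> closure B"
  shows "measure_pmf.prob (Pi_pmf E 0 (\<lambda>_. pmf_of_set {..<\<tau>}))
           {\<rho>. \<exists>v. lsp_not_unique pos E l \<rho> B v s}
         \<le> real (card V) * real (max_degree V E - 1) / real \<tau>"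
proof -
  have "{\<rho>. \<exists>v. lsp_not_unique pos E l \<rho> B v s} \<subseteq>
      {\<rho>. \<exists>e\<in>E. \<exists>e'\<in>E. e \<noteq> e' \<and> fst e = fst e' \<and>
            lsp_edge_tie pos E l \<rho> B (fst e) s e \<and> lsp_edge_tie pos E l \<rho> B (fst e') s e'}"
    (is "_ \<subseteq> ?ties")
  proof
    fix \<rho>
    assume "\<rho> \<in> {\<rho>. \<exists>v. lsp_not_unique pos E l \<rho> B v s}"
    then obtain v where "lsp_not_unique pos E l \<rho> B v s"
      by blast
    then obtain e e' where "e \<in> E" "e' \<in> E" "e \<noteq> e'" "fst e = fst e'"
      "lsp_edge_tie pos E l \<rho> B (fst e) s e" "lsp_edge_tie pos E l \<rho> B (fst e') s e'"
      by (rule lsp_not_unique_into_imp_edge_ties[where pos = pos and s = s, OF B assms(3)])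
    then show "\<rho> \<in> ?ties"
      by blast
  qed
  then have "measure_pmf.prob (Pi_pmf E 0 (\<lambda>_. pmf_of_set {..<\<tau>})) {\<rho>. \<exists>v. lsp_not_unique pos E l \<rho> B v s}
      \<le> measure_pmf.prob (Pi_pmf E 0 (\<lambda>_. pmf_of_set {..<\<tau>})) ?ties"
    by (rule measure_pmf.finite_measure_mono) simp
  also have "\<dots> \<le> real (card V) * real (max_degree V E - 1) / real \<tau>"
    by (rule prob_edge_tie_pairs_le[OF assms(1,2,4), of fst pos l B fst "\<lambda>_. s"]) simp
  finally show ?thesis .
qed


theorem lemma6:
  fixes V :: "'v set" and E :: "('v \<times> 'v) set" and pos :: "'v \<Rightarrow> real \<times> real"
    and l :: "'v \<times> 'v \<Rightarrow> real" and \<tau> :: nat and x0 y0 L :: real and i :: nat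
    and B :: "(real \<times> real) set" and s :: 'v
  assumes "road_network V E pos l"
    and "tight_cover V pos x0 y0 L"
    and "0 < \<tau>"
    and "i \<le> grid_height V pos x0 y0 L"
    and "is_4x4_region x0 y0 L (2 ^ (grid_height V pos x0 y0 L + 2 - i)) B"
    and "s \<in> V" and "pos s \<in> B"
  shows "measure_pmf.prob (Pi_pmf E 0 (\<lambda>_. pmf_of_set {..<\<tau>}))
           {\<rho>. (\<exists>v\<in>V. v \<noteq> s \<and> lsp_not_unique pos E l \<rho> B s v) \<or>
                (\<exists>v\<in>V. v \<noteq> s \<and> lsp_not_unique pos E l \<rho> B v s)}
         \<le> real (max_degree V E choose 2) * 2 * real (card V) / real \<tau>"
proof -
  have V: "finite V" "E \<subseteq> V \<times> V" and "\<forall>e\<in>E. 0 < l e"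
    using assms(1) unfolding road_network_def by blast+
  then have l: "\<forall>e\<in>E. 0 \<le> l e"
    by (simp add: less_imp_le)
  have B: "convex B" "pos s \<in> closure B"
    using is_4x4_region_convex[OF assms(5)] assms(7) closure_subset by auto
  let ?M = "Pi_pmf E 0 (\<lambda>_. pmf_of_set {..<\<tau>})"
  let ?from = "{\<rho>. \<exists>v. lsp_not_unique pos E l \<rho> B s v}"
  let ?into = "{\<rho>. \<exists>v. lsp_not_unique pos E l \<rho> B v s}"
  let ?c = "real (card V) * real (max_degree V E - 1) / real \<tau>"
  have "measure_pmf.prob ?M {\<rho>. (\<exists>v\<in>V. v \<noteq> s \<and> lsp_not_unique pos E l \<rho> B s v) \<or>
        (\<exists>v\<in>V. v \<noteq> s \<and> lsp_not_unique pos E l \<rho> B v s)} \<le> measure_pmf.prob ?M (?from \<union> ?into)"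
    by (rule measure_pmf.finite_measure_mono) auto
  also have "\<dots> \<le> measure_pmf.prob ?M ?from + measure_pmf.prob ?M ?into"
    by (rule measure_Un_le) auto
  also have "\<dots> \<le> ?c + ?c"
    using prob_lsp_not_unique_from_le[where pos = pos and s = s, OF V l assms(3) B]
      prob_lsp_not_unique_into_le[where pos = pos and s = s, OF V l assms(3) B]
    by (rule add_mono)
  also have "\<dots> = 2 * (real (card V) * real (max_degree V E - 1)) / real \<tau>"
    by simp
  also have "\<dots> \<le> 2 * (real (card V) * real (max_degree V E choose 2)) / real \<tau>"
    using diff_one_le_choose_two by (intro divide_right_mono mult_left_mono) simp_all
  also have "\<dots> = real (max_degree V E choose 2) * 2 * real (card V) / real \<tau>"
    by simp
  finally show ?thesis .
qed

end
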